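(* Let $G$ be a directed acyclic graph on vertex set $V$ and let $\pi:V\to\{1,\dots,n\}$ be a bijection such that $xy\in E(G)$ implies $\pi(x)<\pi(y)$. Let $u,v\in V$ with $\pi(u)>\pi(v)$ be such that $G\cup\{uv\}$ is still acyclic. Let $W=\{w\in V:\pi(w)\in[\pi(v),\pi(u)]\}$, let $T\subseteq W$ be the set of vertices of $W$ reachable from $v$ in $G$ (including $v$), let $S\subseteq W$ be the set of vertices of $W$ that can reach $u$ in $G$ (including $u$), and let $Z=W\setminus(S\cup T)$. Then in $G\cup\{uv\}$: no vertex $t\in T$ can reach a vertex $s\in S$; no vertex $t\in T$ can reach a vertex $z\in Z$; and no vertex $z\in Z$ can reach a vertex $s\in S$. *)

theory Defs
  imports Main
begin

end

theory Submission
  imports Defs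
begin

text \<open>Adding the edge \<open>uv\<close> keeps \<open>G\<close> acyclic exactly when \<open>v\<close> does not reach \<open>u\<close> in \<open>G\<close>.
  Then a path starting at a vertex reachable from \<open>v\<close> can never use the new edge, since it
  would first have to reach \<open>u\<close>; dually, a path ending at a vertex that reaches \<open>u\<close> never uses it.
  So every path starting in \<open>T\<close> or ending in \<open>S\<close> is a path of \<open>G\<close>, and such a path from \<open>T\<close> to \<open>S\<close>,
  \<open>T\<close> to \<open>Z\<close>, or \<open>Z\<close> to \<open>S\<close> would give \<open>v\<close> reaching \<open>u\<close>, or put its endpoint in \<open>Z\<close> into \<open>T\<close> or \<open>S\<close>.\<close>

lemma rtrancl_insert_from_reachable_head:
  assumes "(v, u) \<notin> E\<^sup>*" and "(v, t) \<in> E\<^sup>*" and "(t, y) \<in> (insert (u, v) E)\<^sup>*"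
  shows "(t, y) \<in> E\<^sup>*"
  using assms by (auto simp: rtrancl_insert intro: rtrancl_trans)

lemma rtrancl_insert_to_reaching_tail:
  assumes "(v, u) \<notin> E\<^sup>*" and "(s, u) \<in> E\<^sup>*" and "(x, s) \<in> (insert (u, v) E)\<^sup>*"
  shows "(x, s) \<in> E\<^sup>*"
  using assms by (auto simp: rtrancl_insert intro: rtrancl_trans)

theorem lemma2:
  fixes V :: "'a set" and E :: "('a \<times> 'a) set" and \<pi> :: "'a \<Rightarrow> nat" and n :: nat
    and u v :: 'a and W T S Z :: "'a set"
  assumes edges: "E \<subseteq> V \<times> V"
    and acyc: "acyclic E"
    and bij: "bij_betw \<pi> V {1..n}"
    and topo: "\<And>x y. (x, y) \<in> E \<Longrightarrow> \<pi> x < \<pi> y"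
    and uV: "u \<in> V" and vV: "v \<in> V"
    and uv: "\<pi> u > \<pi> v"
    and acyc': "acyclic (E \<union> {(u, v)})"
    and W_def: "W = {w \<in> V. \<pi> v \<le> \<pi> w \<and> \<pi> w \<le> \<pi> u}"
    and T_def: "T = {w \<in> W. (v, w) \<in> E\<^sup>*}"
    and S_def: "S = {w \<in> W. (w, u) \<in> E\<^sup>*}"
    and Z_def: "Z = W - (S \<union> T)"
  shows "(\<forall>t\<in>T. \<forall>s\<in>S. (t, s) \<notin> (E \<union> {(u, v)})\<^sup>*)
       \<and> (\<forall>t\<in>T. \<forall>z\<in>Z. (t, z) \<notin> (E \<union> {(u, v)})\<^sup>*)
       \<and> (\<forall>z\<in>Z. \<forall>s\<in>S. (z, s) \<notin> (E \<union> {(u, v)})\<^sup>*)"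
proof -
  have F: "E \<union> {(u, v)} = insert (u, v) E" by simp
  have vu: "(v, u) \<notin> E\<^sup>*" using acyc' by (simp add: F acyclic_insert)
  note from_T = rtrancl_insert_from_reachable_head[OF vu]
  note into_S = rtrancl_insert_to_reaching_tail[OF vu]
  have "(t, s) \<notin> (insert (u, v) E)\<^sup>*" if "t \<in> T" "s \<in> S" for t s
    using that vu from_T[of t s] unfolding T_def S_def by (blast intro: rtrancl_trans)
  moreover have "(t, z) \<notin> (insert (u, v) E)\<^sup>*" if "t \<in> T" "z \<in> Z" for t z
    using that from_T[of t z] unfolding Z_def T_def by (blast intro: rtrancl_trans)
  moreover have "(z, s) \<notin> (insert (u, v) E)\<^sup>*" if "z \<in> Z" "s \<in> S" for z s
    using that into_S[of s z] unfolding Z_def S_def by (blast intro: rtrancl_trans)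
  ultimately show ?thesis unfolding F by blast
qed

end
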